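(* There exist constants $c_{\phi^\circ},C_{\phi^\circ}>0$, depending only on $\phi^\circ$, such that for every $x\in\Omega$ and all $p,p'\in\mathbb R^d$ with $|p|=1$ and $|p'|\le1$, $$\phi^\circ(x,p)-|p'|\tilde\psi(|p'|)\,\phi^\circ_p(x,p')\cdot p\ \ge\ c_{\phi^\circ}|p-p'|^2,$$ $$\phi^\circ(x,p)-|p'|\tilde\psi(|p'|)\,\phi^\circ_p(x,p')\cdot p\ \le\ C_{\phi^\circ}\big(|p-p'|^2+(1-|p'|)\big).$$
   Context: $\Omega=\mathbb T^d$. $A:\Omega\times\mathbb R^d\to\mathbb R$ belongs to $C^2(\Omega\times(\mathbb R^d\setminus\{0\}))\cap C^1(\Omega\times\mathbb R^d)$, is positive for $p\ne0$, $A(x,\lambda p)=\lambda^2A(x,p)$ for $\lambda>0$, $A_0|p|^2\le A(x,p)\le A_1|p|^2$ ($0<A_0\le A_1$), $|A_p(x,p)|\le a_1|p|$, and $A(x,\cdot)$ is strongly convex: $(A_p(x,p)-A_p(x,q))\cdot(p-q)\ge C_0|p-q|^2$ for all $x,p,q$. $\phi^\circ(x,p):=\sqrt{A(x,p)}$ and $\phi^\circ_p$ is its gradient in $p$. $\tilde\psi\in C^\infty([0,\infty))$ satisfies $\tilde\psi\equiv0$ on $[0,1/4]$, $\tilde\psi\equiv1$ on $[1/2,\infty)$, $\tilde\psi'\ge0$; the term $|p'|\tilde\psi(|p'|)\phi^\circ_p(x,p')$ is interpreted as $0$ when $|p'|\le1/4$. *)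

theory Defs
  imports "HOL-Analysis.Analysis"
begin

definition C1_on :: "'a::real_normed_vector set \<Rightarrow> ('a \<Rightarrow> 'b::real_normed_vector) \<Rightarrow> bool" where
  "C1_on S f \<longleftrightarrow> (\<exists>D. (\<forall>z\<in>S. (f has_derivative blinfun_apply (D z)) (at z)) \<and> continuous_on S D)"

definition C2_on :: "'a::real_normed_vector set \<Rightarrow> ('a \<Rightarrow> 'b::real_normed_vector) \<Rightarrow> bool" where
  "C2_on S f \<longleftrightarrow> (\<exists>D. (\<forall>z\<in>S. (f has_derivative blinfun_apply (D z)) (at z)) \<and> C1_on S D)"

definition grad :: "('a::real_inner \<Rightarrow> real) \<Rightarrow> 'a \<Rightarrow> 'a" where
  "grad f p = (SOME g. (f has_derivative (\<lambda>h. g \<bullet> h)) (at p))"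

text \<open>C-infinity on [0,infinity): a tower of successive derivatives (one-sided at 0).\<close>
definition smooth_nonneg :: "(real \<Rightarrow> real) \<Rightarrow> (nat \<Rightarrow> real \<Rightarrow> real) \<Rightarrow> bool" where
  "smooth_nonneg f D \<longleftrightarrow> D 0 = f \<and>
     (\<forall>n. \<forall>t\<ge>0. (D n has_real_derivative D (Suc n) t) (at t within {0..}))"

end

(* Write p' = r q with norm q = 1.  Since the gauge sqrt A is 1-homogeneous, its gradient is
   0-homogeneous, and the quantity in question is sqrt A p - r psi(r) g(q).p, with g the gradient
   of sqrt A.  On the unit sphere the gap sqrt A p - g(q).p is comparable to |p - q|^2: from below,
   rescale q onto the level set of A through p, where the gap becomes a Bregman divergence of A,
   controlled by strong convexity; from above, AM-GM bounds the gap by the Bregman divergence of A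
   at (p, q) divided by 2 sqrt A q, which is O(|p - q|^2) by a uniform C^2 bound on the compact set
   (unit cube) x (annulus 1/2 <= |p| <= 1), periodicity reducing every x to the cube.  Finally
   |p - p'|^2 and |p - q|^2 agree up to a factor 2 and an error 2(1 - r), and the remaining
   cases (r <= 1/4, r < 1/2, or g(q).p <= 0) only need the bounds A0 <= A <= A1 on the sphere and
   the gradient bound. *)
theory Submission
  imports Defs
begin

lemma has_derivative_grad:
  fixes f :: "'a::euclidean_space \<Rightarrow> real"
  assumes "(f has_derivative L) (at p)"
  shows "(f has_derivative (\<lambda>h. grad f p \<bullet> h)) (at p)"
    and "L = (\<lambda>h. grad f p \<bullet> h)"
proof -
  have "L = (\<lambda>h. adjoint L 1 \<bullet> h)"
    using adjoint_works[OF has_derivative_linear[OF assms], of _ 1]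
    by (simp add: inner_commute fun_eq_iff)
  then have "\<exists>g. (f has_derivative (\<lambda>h. g \<bullet> h)) (at p)"
    using assms by metis
  then show grad: "(f has_derivative (\<lambda>h. grad f p \<bullet> h)) (at p)"
    unfolding grad_def by (rule someI_ex)
  show "L = (\<lambda>h. grad f p \<bullet> h)"
    using has_derivative_unique[OF assms grad] .
qed

lemma grad_eqI:
  fixes f :: "'a::euclidean_space \<Rightarrow> real"
  assumes "(f has_derivative (\<lambda>h. v \<bullet> h)) (at p)"
  shows "grad f p = v"
  using has_derivative_grad(2)[OF assms] vector_eq_rdot by metis

lemma has_real_derivative_along_line:
  fixes f :: "'a::real_inner \<Rightarrow> real"
  assumes "(f has_derivative (\<lambda>h. g \<bullet> h)) (at (q + t *\<^sub>R h))"
  shows "((\<lambda>t. f (q + t *\<^sub>R h)) has_real_derivative g \<bullet> h) (at t)"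
proof -
  have "((\<lambda>t. q + t *\<^sub>R h) has_derivative (\<lambda>s. s *\<^sub>R h)) (at t)"
    by (auto intro!: derivative_eq_intros)
  from has_derivative_compose[OF this assms]
  have "((\<lambda>t. f (q + t *\<^sub>R h)) has_derivative (\<lambda>s. (g \<bullet> h) * s)) (at t)"
    by (simp add: mult.commute)
  then show ?thesis
    by (simp add: has_field_derivative_def)
qed

lemma taylor_remainder_lower_bound:
  fixes \<phi> \<phi>' :: "real \<Rightarrow> real"
  assumes deriv: "\<And>t. 0 \<le> t \<Longrightarrow> t \<le> 1 \<Longrightarrow> (\<phi> has_real_derivative \<phi>' t) (at t)"
    and incr: "\<And>t. 0 \<le> t \<Longrightarrow> t \<le> 1 \<Longrightarrow> m * t \<le> \<phi>' t - \<phi>' 0"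
  shows "m / 2 \<le> \<phi> 1 - \<phi> 0 - \<phi>' 0"
proof -
  define k where "k t = \<phi> t - t * \<phi>' 0 - m / 2 * t\<^sup>2" for t
  have "k 0 \<le> k 1"
  proof (rule DERIV_nonneg_imp_nondecreasing[of 0 1 k])
    fix t :: real assume "0 \<le> t" "t \<le> 1"
    then have "(k has_real_derivative \<phi>' t - \<phi>' 0 - m * t) (at t)"
      unfolding k_def by (auto intro!: derivative_eq_intros deriv)
    with incr \<open>0 \<le> t\<close> \<open>t \<le> 1\<close> show "\<exists>y. (k has_real_derivative y) (at t) \<and> 0 \<le> y"
      by force
  qed simp
  then show ?thesis unfolding k_def by simp
qed

definition bregman :: "('a::euclidean_space \<Rightarrow> real) \<Rightarrow> 'a \<Rightarrow> 'a \<Rightarrow> real" where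
  "bregman f p q = f p - f q - grad f q \<bullet> (p - q)"

lemma has_real_derivative_along_segment:
  fixes f :: "'a::euclidean_space \<Rightarrow> real"
  assumes deriv: "\<And>w. w \<in> closed_segment q p \<Longrightarrow> (f has_derivative (\<lambda>h. grad f w \<bullet> h)) (at w)"
    and t: "0 \<le> t" "t \<le> 1"
  shows "((\<lambda>t. f (q + t *\<^sub>R (p - q))) has_real_derivative grad f (q + t *\<^sub>R (p - q)) \<bullet> (p - q)) (at t)"
proof (intro has_real_derivative_along_line deriv)
  show "q + t *\<^sub>R (p - q) \<in> closed_segment q p"
    using t by (auto simp: closed_segment_def algebra_simps intro!: exI[of _ t])
qed

lemma bregman_lower_bound:
  fixes f :: "'a::euclidean_space \<Rightarrow> real"
  assumes deriv: "\<And>w. (f has_derivative (\<lambda>h. grad f w \<bullet> h)) (at w)"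
    and monotone: "\<And>p q. C * (norm (p - q))\<^sup>2 \<le> (grad f p - grad f q) \<bullet> (p - q)"
  shows "C / 2 * (norm (p - q))\<^sup>2 \<le> bregman f p q"
proof -
  let ?\<phi>' = "\<lambda>t. grad f (q + t *\<^sub>R (p - q)) \<bullet> (p - q)"
  have "C * (norm (p - q))\<^sup>2 / 2 \<le> f (q + 1 *\<^sub>R (p - q)) - f (q + 0 *\<^sub>R (p - q)) - ?\<phi>' 0"
  proof (rule taylor_remainder_lower_bound)
    fix t :: real assume t: "0 \<le> t" "t \<le> 1"
    show "((\<lambda>t. f (q + t *\<^sub>R (p - q))) has_real_derivative ?\<phi>' t) (at t)"
      using has_real_derivative_along_segment[OF deriv t] .
    have "t * (C * t * (norm (p - q))\<^sup>2) \<le> t * (?\<phi>' t - ?\<phi>' 0)"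
      using monotone[of "q + t *\<^sub>R (p - q)" q]
      by (simp add: power2_eq_square inner_diff_left mult_ac)
    then show "C * (norm (p - q))\<^sup>2 * t \<le> ?\<phi>' t - ?\<phi>' 0"
      using t by (cases "t = 0") (auto simp: mult_ac)
  qed
  then show ?thesis unfolding bregman_def by simp
qed

lemma bregman_upper_bound:
  fixes f :: "'a::euclidean_space \<Rightarrow> real"
  assumes deriv: "\<And>w. w \<in> closed_segment q p \<Longrightarrow> (f has_derivative (\<lambda>h. grad f w \<bullet> h)) (at w)"
    and lipschitz: "\<And>w. w \<in> closed_segment q p \<Longrightarrow> norm (grad f w - grad f q) \<le> M * norm (w - q)"
  shows "bregman f p q \<le> M / 2 * (norm (p - q))\<^sup>2"
proof -
  let ?\<phi>' = "\<lambda>t. grad f (q + t *\<^sub>R (p - q)) \<bullet> (p - q)"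
  have "- M * (norm (p - q))\<^sup>2 / 2 \<le>
      - f (q + 1 *\<^sub>R (p - q)) - - f (q + 0 *\<^sub>R (p - q)) - - ?\<phi>' 0"
  proof (rule taylor_remainder_lower_bound)
    fix t :: real assume t: "0 \<le> t" "t \<le> 1"
    show "((\<lambda>t. - f (q + t *\<^sub>R (p - q))) has_real_derivative - ?\<phi>' t) (at t)"
      using has_real_derivative_along_segment[OF deriv t] by (rule DERIV_minus)
    define w where "w = q + t *\<^sub>R (p - q)"
    have "w \<in> closed_segment q p"
      using t by (auto simp: w_def closed_segment_def algebra_simps intro!: exI[of _ t])
    have "(grad f w - grad f q) \<bullet> (p - q) \<le> norm (grad f w - grad f q) * norm (p - q)"
      by (rule norm_cauchy_schwarz)
    also have "\<dots> \<le> M * norm (t *\<^sub>R (p - q)) * norm (p - q)"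
      using lipschitz[OF \<open>w \<in> closed_segment q p\<close>] by (intro mult_right_mono) (auto simp: w_def)
    finally show "- M * (norm (p - q))\<^sup>2 * t \<le> - ?\<phi>' t - - ?\<phi>' 0"
      using t by (simp add: w_def inner_diff_left power2_eq_square mult_ac)
  qed
  then show ?thesis unfolding bregman_def by simp
qed

lemma grad_sqrt:
  fixes f :: "'a::euclidean_space \<Rightarrow> real"
  assumes "(f has_derivative (\<lambda>h. grad f q \<bullet> h)) (at q)" and "0 < f q"
  shows "grad (\<lambda>v. sqrt (f v)) q = (1 / (2 * sqrt (f q))) *\<^sub>R grad f q"
proof (rule grad_eqI)
  have "(\<lambda>h. (grad f q \<bullet> h) * (inverse (sqrt (f q)) / 2)) = (\<lambda>h. ((1 / (2 * sqrt (f q))) *\<^sub>R grad f q) \<bullet> h)"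
    by (simp add: fun_eq_iff field_simps)
  with has_derivative_real_sqrt[OF assms(2,1)]
  show "((\<lambda>v. sqrt (f v)) has_derivative (\<lambda>h. ((1 / (2 * sqrt (f q))) *\<^sub>R grad f q) \<bullet> h)) (at q)"
    by simp
qed

lemma norm_diff_ray_unit_ge:
  fixes p q :: "'a::real_inner"
  assumes "norm p = 1" "norm q = 1" "0 \<le> t"
  shows "(norm (p - q))\<^sup>2 / 4 \<le> (norm (p - t *\<^sub>R q))\<^sup>2"
proof -
  define c where "c = p \<bullet> q"
  have "\<bar>c\<bar> \<le> 1"
    unfolding c_def using Cauchy_Schwarz_ineq2[of p q] assms by simp
  have "p \<bullet> p = 1" "q \<bullet> q = 1"
    using assms by (simp_all add: dot_square_norm)
  then have ray: "(norm (p - t *\<^sub>R q))\<^sup>2 = 1 - 2 * t * c + t\<^sup>2"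
    and chord: "(norm (p - q))\<^sup>2 = 2 - 2 * c"
    unfolding power2_norm_eq_inner c_def
    by (simp_all add: inner_diff_left inner_diff_right inner_commute power2_eq_square algebra_simps)
  have "2 - 2 * c \<le> 4 * (1 - 2 * t * c + t\<^sup>2)"
  proof (cases "c \<le> 0")
    case True
    then have "2 * t * c \<le> 0"
      using \<open>0 \<le> t\<close> by (simp add: mult_nonneg_nonpos)
    then show ?thesis
      using abs_le_D2[OF \<open>\<bar>c\<bar> \<le> 1\<close>] zero_le_power2[of t] by (smt (verit))
  next
    case False
    \<comment> \<open>the minimum over t is 1 - c^2, and (1 - c)(1 + c) \<ge> (1 - c)/2\<close>
    have "2 * t * c \<le> c\<^sup>2 + t\<^sup>2"
      using zero_le_power2[of "t - c"] by (simp add: power2_diff algebra_simps)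
    moreover have "0 \<le> (1 - c) * (2 * c + 1)"
      using \<open>\<bar>c\<bar> \<le> 1\<close> False by simp
    then have "2 * c\<^sup>2 \<le> 1 + c"
      by (simp add: power2_eq_square algebra_simps)
    ultimately show ?thesis
      by (smt (verit))
  qed
  then show ?thesis
    using ray chord by simp
qed

lemma norm_on_short_chord:
  fixes p q :: "'a::real_normed_vector"
  assumes "norm p = 1" "norm q = 1" "norm (p - q) \<le> 1" and w: "w \<in> closed_segment q p"
  shows "1/2 \<le> norm w" and "norm w \<le> 1"
proof -
  obtain u where u: "0 \<le> u" "u \<le> 1" and w: "w = (1 - u) *\<^sub>R q + u *\<^sub>R p"
    using w unfolding closed_segment_def by blast
  have "w - q = u *\<^sub>R (p - q)" and "p - w = (1 - u) *\<^sub>R (p - q)"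
    unfolding w by (simp_all add: algebra_simps)
  then have "norm (w - q) = u * norm (p - q)" and "norm (p - w) = (1 - u) * norm (p - q)"
    using u by simp_all
  moreover have "norm q - norm (w - q) \<le> norm w" and "norm p - norm (p - w) \<le> norm w"
    using norm_triangle_ineq2[of q w] norm_triangle_ineq3[of p w] by (simp_all add: norm_minus_commute)
  \<comment> \<open>w is within half the chord length of one of the endpoints\<close>
  ultimately show "1/2 \<le> norm w"
  proof (cases "u \<le> 1/2")
    case True
    then have "u * norm (p - q) \<le> 1/2 * 1"
      using u assms(3) by (intro mult_mono) auto
    with \<open>norm q - norm (w - q) \<le> norm w\<close> \<open>norm (w - q) = u * norm (p - q)\<close> assms(2)
    show ?thesis by linarith
  next
    case False
    then have "(1 - u) * norm (p - q) \<le> 1/2 * 1"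
      using u assms(3) by (intro mult_mono) auto
    with \<open>norm p - norm (p - w) \<le> norm w\<close> \<open>norm (p - w) = (1 - u) * norm (p - q)\<close> assms(1)
    show ?thesis by linarith
  qed
  show "norm w \<le> 1"
    using norm_triangle_ineq[of "(1 - u) *\<^sub>R q" "u *\<^sub>R p"] assms(1,2) u w by simp
qed

lemma norm_diff_shrink_unit:
  fixes p q :: "'a::real_normed_vector"
  assumes "norm q = 1" "0 \<le> r" "r \<le> 1"
  shows "(norm (p - r *\<^sub>R q))\<^sup>2 \<le> 2 * (norm (p - q))\<^sup>2 + 2 * (1 - r)"
    and "(norm (p - q))\<^sup>2 \<le> 2 * (norm (p - r *\<^sub>R q))\<^sup>2 + 2 * (1 - r)"
proof -
  have sq: "x\<^sup>2 \<le> 2 * y\<^sup>2 + 2 * (1 - r)" if "0 \<le> x" "x \<le> y + (1 - r)" "0 \<le> y" for x y :: real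
  proof -
    have "x\<^sup>2 \<le> (y + (1 - r))\<^sup>2"
      using that assms by (intro power_mono) auto
    also have "\<dots> \<le> 2 * y\<^sup>2 + 2 * (1 - r)\<^sup>2"
      using zero_le_power2[of "y - (1 - r)"] by (simp add: power2_sum power2_diff)
    also have "(1 - r)\<^sup>2 \<le> 1 - r"
      using assms by (simp add: power2_eq_square mult_left_le)
    finally show ?thesis by simp
  qed
  have "norm ((1 - r) *\<^sub>R q) = 1 - r"
    using assms by simp
  moreover have "p - r *\<^sub>R q = (p - q) + (1 - r) *\<^sub>R q" and "p - q = (p - r *\<^sub>R q) - (1 - r) *\<^sub>R q"
    by (simp_all add: algebra_simps)
  ultimately have "norm (p - r *\<^sub>R q) \<le> norm (p - q) + (1 - r)"
    and "norm (p - q) \<le> norm (p - r *\<^sub>R q) + (1 - r)"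
    by (metis norm_triangle_ineq norm_triangle_ineq4)+
  then show "(norm (p - r *\<^sub>R q))\<^sup>2 \<le> 2 * (norm (p - q))\<^sup>2 + 2 * (1 - r)"
    and "(norm (p - q))\<^sup>2 \<le> 2 * (norm (p - r *\<^sub>R q))\<^sup>2 + 2 * (1 - r)"
    using sq norm_ge_zero by blast+
qed

lemma norm_diff_unit_sq_le:
  fixes p p' :: "'a::real_normed_vector"
  assumes "norm p = 1" "norm p' \<le> 1"
  shows "(norm (p - p'))\<^sup>2 \<le> 4"
proof -
  have "norm (p - p') \<le> 2"
    using norm_triangle_ineq4[of p p'] assms by simp
  then show ?thesis
    using power_mono[of "norm (p - p')" 2 2] by simp
qed

lemma has_derivative_partial_grad:
  fixes F :: "'a::real_normed_vector \<times> 'b::euclidean_space \<Rightarrow> real"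
  assumes "(F has_derivative blinfun_apply D) (at (x, w))"
  shows "((\<lambda>v. F (x, v)) has_derivative (\<lambda>h. grad (\<lambda>v. F (x, v)) w \<bullet> h)) (at w)"
    and "grad (\<lambda>v. F (x, v)) w \<bullet> h = D (0, h)"
proof -
  have "((\<lambda>v. (x, v)) has_derivative (\<lambda>h. (0, h))) (at w)"
    by (auto intro!: derivative_eq_intros)
  from has_derivative_compose[OF this assms]
  have partial: "((\<lambda>v. F (x, v)) has_derivative (\<lambda>h. D (0, h))) (at w)" .
  show "((\<lambda>v. F (x, v)) has_derivative (\<lambda>h. grad (\<lambda>v. F (x, v)) w \<bullet> h)) (at w)"
    using has_derivative_grad(1)[OF partial] .
  show "grad (\<lambda>v. F (x, v)) w \<bullet> h = D (0, h)"
    using has_derivative_grad(2)[OF partial] by metis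
qed

lemma partial_grad_lipschitz:
  fixes F :: "'a::euclidean_space \<times> 'b::euclidean_space \<Rightarrow> real"
  assumes F: "\<And>w. w \<in> W \<Longrightarrow> (F has_derivative blinfun_apply (F' (x, w))) (at (x, w))"
    and D: "\<And>w. w \<in> W \<Longrightarrow> (F' has_derivative blinfun_apply (F'' (x, w))) (at (x, w))"
    and bound: "\<And>w. w \<in> W \<Longrightarrow> norm (F'' (x, w)) \<le> M"
    and "convex W" "w \<in> W" "q \<in> W"
  shows "norm (grad (\<lambda>v. F (x, v)) w - grad (\<lambda>v. F (x, v)) q) \<le> M * norm (w - q)"
proof -
  define d where "d = grad (\<lambda>v. F (x, v)) w - grad (\<lambda>v. F (x, v)) q"
  have "norm (F' (x, w) - F' (x, q)) \<le> M * norm ((x, w) - (x, q))"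
  proof (rule differentiable_bound[where S = "{x} \<times> W" and f' = "\<lambda>z. blinfun_apply (F'' z)"])
    show "convex ({x} \<times> W)"
      using \<open>convex W\<close> by (simp add: convex_Times)
  qed (use assms in \<open>auto simp: norm_blinfun.rep_eq[symmetric] intro: has_derivative_at_withinI\<close>)
  then have Lip: "norm (F' (x, w) - F' (x, q)) \<le> M * norm (w - q)"
    by (simp add: norm_Pair)
  have "(norm d)\<^sup>2 = (F' (x, w) - F' (x, q)) (0, d)"
    using has_derivative_partial_grad(2)[OF F[OF \<open>w \<in> W\<close>]]
      has_derivative_partial_grad(2)[OF F[OF \<open>q \<in> W\<close>]]
    by (simp add: d_def power2_norm_eq_inner inner_diff_left blinfun.diff_left)
  also have "\<dots> \<le> norm (F' (x, w) - F' (x, q)) * norm d"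
    using norm_blinfun[of "F' (x, w) - F' (x, q)" "(0, d)"] by (simp add: norm_Pair)
  also have "\<dots> \<le> M * norm (w - q) * norm d"
    using Lip by (simp add: mult_right_mono)
  finally have "norm d * norm d \<le> M * norm (w - q) * norm d"
    by (simp add: power2_eq_square)
  then show ?thesis
    using order_trans[OF norm_ge_zero bound[OF \<open>w \<in> W\<close>]]
    unfolding d_def by (cases "norm d = 0") (auto simp: d_def)
qed

lemma C2_on_bregman_bound:
  fixes F :: "'a::euclidean_space \<times> 'b::euclidean_space \<Rightarrow> real"
  assumes C2: "C2_on (UNIV \<times> (UNIV - {0})) F" and "compact X"
  obtains M where "0 \<le> M"
    and "\<And>x p q. x \<in> X \<Longrightarrow> norm p = 1 \<Longrightarrow> norm q = 1 \<Longrightarrow> norm (p - q) \<le> 1 \<Longrightarrow>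
      bregman (\<lambda>v. F (x, v)) p q \<le> M * (norm (p - q))\<^sup>2"
proof -
  define U :: "('a \<times> 'b) set" where "U = UNIV \<times> (UNIV - {0})"
  obtain D D2 where F: "\<And>z. z \<in> U \<Longrightarrow> (F has_derivative blinfun_apply (D z)) (at z)"
    and D: "\<And>z. z \<in> U \<Longrightarrow> (D has_derivative blinfun_apply (D2 z)) (at z)"
    and "continuous_on U D2"
    using C2 unfolding C2_on_def C1_on_def U_def by blast
  define K where "K = X \<times> (cball (0::'b) 1 - ball 0 (1/2))"
  have "compact K"
    unfolding K_def using \<open>compact X\<close> by (intro compact_Times compact_diff) auto
  moreover have "K \<subseteq> U"
    by (auto simp: K_def U_def)
  ultimately obtain M where "0 \<le> M" and M: "\<And>z. z \<in> K \<Longrightarrow> norm (D2 z) \<le> M"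
    using continuous_on_compact_bound continuous_on_subset[OF \<open>continuous_on U D2\<close>] by metis
  show ?thesis
  proof (rule that[of "M / 2"])
    fix x and p q :: 'b
    assume "x \<in> X" "norm p = 1" "norm q = 1" "norm (p - q) \<le> 1"
    then have KU: "(x, w) \<in> K" "(x, w) \<in> U" if "w \<in> closed_segment q p" for w
      using norm_on_short_chord[OF \<open>norm p = 1\<close> \<open>norm q = 1\<close> _ that] \<open>K \<subseteq> U\<close>
      by (auto simp: K_def)
    show "bregman (\<lambda>v. F (x, v)) p q \<le> M / 2 * (norm (p - q))\<^sup>2"
    proof (rule bregman_upper_bound)
      fix w assume w: "w \<in> closed_segment q p"
      show "((\<lambda>v. F (x, v)) has_derivative (\<lambda>h. grad (\<lambda>v. F (x, v)) w \<bullet> h)) (at w)"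
        using has_derivative_partial_grad(1)[OF F[OF KU(2)[OF w]]] .
      show "norm (grad (\<lambda>v. F (x, v)) w - grad (\<lambda>v. F (x, v)) q) \<le> M * norm (w - q)"
        by (rule partial_grad_lipschitz[where W = "closed_segment q p" and F' = D and F'' = D2])
          (use F D M KU w in auto)
    qed
  qed (use \<open>0 \<le> M\<close> in simp)
qed

(* The quantity of the theorem for \<Phi> = phi^o(x, -) = sqrt (A x) and g = phi^o_p(x, -). *)
definition cutoff_pairing ::
  "('a::real_inner \<Rightarrow> real) \<Rightarrow> ('a \<Rightarrow> 'a) \<Rightarrow> (real \<Rightarrow> real) \<Rightarrow> 'a \<Rightarrow> 'a \<Rightarrow> real" where
  "cutoff_pairing \<Phi> g \<psi> p p' =
    \<Phi> p - (if norm p' \<le> 1/4 then 0 else norm p' * \<psi> (norm p') * (g p' \<bullet> p))"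

lemma polar_cases:
  fixes p' :: "'a::real_normed_vector"
  assumes "norm p' \<le> 1"
  obtains "norm p' \<le> 1/4"
    | q r where "norm q = 1" "1/4 < r" "r \<le> 1" "p' = r *\<^sub>R q"
proof (cases "norm p' \<le> 1/4")
  case True
  then show ?thesis
    by (rule that(1))
next
  case False
  then have "p' \<noteq> 0"
    by auto
  show ?thesis
  proof (rule that(2))
    show "norm ((1 / norm p') *\<^sub>R p') = 1" and "p' = norm p' *\<^sub>R ((1 / norm p') *\<^sub>R p')"
      using \<open>p' \<noteq> 0\<close> by simp_all
  qed (use False assms in auto)
qed

(* \<Phi> and g abstract the 1-homogeneous gauge sqrt (A x) and its 0-homogeneous gradient. *)
locale sphere_gap =
  fixes \<Phi> :: "'a::euclidean_space \<Rightarrow> real" and g :: "'a \<Rightarrow> 'a" and \<psi> :: "real \<Rightarrow> real"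
    and m m' B L K :: real
  assumes m_pos: "0 < m"
    and \<Phi>_bounds: "\<And>p. norm p = 1 \<Longrightarrow> m \<le> \<Phi> p \<and> \<Phi> p \<le> m'"
    and g_radial: "\<And>q t. norm q = 1 \<Longrightarrow> 0 < t \<Longrightarrow> g (t *\<^sub>R q) = g q"
    and g_bound: "\<And>p q. norm p = 1 \<Longrightarrow> norm q = 1 \<Longrightarrow> \<bar>g q \<bullet> p\<bar> \<le> B"
    and L_pos: "0 < L"
    and gap_lower: "\<And>p q. norm p = 1 \<Longrightarrow> norm q = 1 \<Longrightarrow> L * (norm (p - q))\<^sup>2 \<le> \<Phi> p - g q \<bullet> p"
    and gap_upper: "\<And>p q. norm p = 1 \<Longrightarrow> norm q = 1 \<Longrightarrow> \<Phi> p - g q \<bullet> p \<le> K * (norm (p - q))\<^sup>2"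
    and \<psi>_range: "\<And>t. 1/4 \<le> t \<Longrightarrow> 0 \<le> \<psi> t \<and> \<psi> t \<le> 1"
    and \<psi>_one: "\<And>t. 1/2 \<le> t \<Longrightarrow> \<psi> t = 1"
begin

lemma constants_nonneg: "0 \<le> B" "0 \<le> K" "0 \<le> m'"
proof -
  obtain b :: 'a where "b \<in> Basis"
    using nonempty_Basis by blast
  then have b: "norm b = 1" "norm (- b) = 1"
    by simp_all
  show "0 \<le> B"
    using g_bound[OF b(1) b(1)] by linarith
  show "0 \<le> m'"
    using \<Phi>_bounds[OF b(1)] m_pos by linarith
  have "L * (norm (b - - b))\<^sup>2 \<le> K * (norm (b - - b))\<^sup>2"
    using gap_lower[OF b(1,2)] gap_upper[OF b(1,2)] by linarith
  moreover have "(norm (b - - b))\<^sup>2 = 4"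
    using b by (simp add: scaleR_2[symmetric])
  ultimately show "0 \<le> K"
    using L_pos by simp
qed

lemma cutoff_pairing_polar:
  assumes "norm q = 1" "1/4 < r"
  shows "cutoff_pairing \<Phi> g \<psi> p (r *\<^sub>R q) = \<Phi> p - r * \<psi> r * (g q \<bullet> p)"
  using assms by (simp add: cutoff_pairing_def g_radial)

lemma polar_lower:
  assumes p: "norm p = 1" and q: "norm q = 1" and r: "1/4 \<le> r" "r \<le> 1"
  shows "min (m / 4) (L / 8) * (norm (p - r *\<^sub>R q))\<^sup>2 \<le> \<Phi> p - r * (g q \<bullet> p)"
proof -
  define c where "c = min (m / 4) (L / 8)"
  have "0 \<le> c"
    using m_pos L_pos by (simp add: c_def)
  have "c * (norm (p - r *\<^sub>R q))\<^sup>2 \<le> c * (2 * (norm (p - q))\<^sup>2 + 2 * (1 - r))"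
    using norm_diff_shrink_unit(1)[OF q, of r p] r \<open>0 \<le> c\<close> by (intro mult_left_mono) auto
  also have "\<dots> = 2 * c * (norm (p - q))\<^sup>2 + 2 * c * (1 - r)"
    by (simp add: algebra_simps)
  also have "\<dots> \<le> L / 4 * (norm (p - q))\<^sup>2 + m * (1 - r)"
    using r m_pos by (intro add_mono mult_right_mono) (auto simp: c_def min_def)
  also have "\<dots> \<le> r * (\<Phi> p - g q \<bullet> p) + (1 - r) * \<Phi> p"
  proof (intro add_mono)
    have "1/4 * (L * (norm (p - q))\<^sup>2) \<le> r * (\<Phi> p - g q \<bullet> p)"
      using gap_lower[OF p q] r L_pos by (intro mult_mono) auto
    then show "L / 4 * (norm (p - q))\<^sup>2 \<le> r * (\<Phi> p - g q \<bullet> p)"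
      by simp
    show "m * (1 - r) \<le> (1 - r) * \<Phi> p"
      using mult_right_mono[of m "\<Phi> p" "1 - r"] \<Phi>_bounds[OF p] r by (simp add: mult.commute)
  qed
  also have "\<dots> = \<Phi> p - r * (g q \<bullet> p)"
    by (simp add: algebra_simps)
  finally show ?thesis
    by (simp add: c_def)
qed

lemma cutoff_pairing_lower:
  assumes p: "norm p = 1" and p': "norm p' \<le> 1"
  shows "min (m / 4) (L / 8) * (norm (p - p'))\<^sup>2 \<le> cutoff_pairing \<Phi> g \<psi> p p'"
proof -
  define c where "c = min (m / 4) (L / 8)"
  have far: "c * (norm (p - p'))\<^sup>2 \<le> \<Phi> p"
  proof -
    have "c * (norm (p - p'))\<^sup>2 \<le> m / 4 * 4"
      using norm_diff_unit_sq_le[OF p p'] m_pos L_pos by (intro mult_mono) (auto simp: c_def)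
    then show ?thesis
      using \<Phi>_bounds[OF p] by simp
  qed
  from p' show ?thesis
  proof (cases rule: polar_cases)
    case 1
    then show ?thesis
      using far by (simp add: cutoff_pairing_def c_def)
  next
    case (2 q r)
    have \<psi>r: "0 \<le> \<psi> r" "\<psi> r \<le> 1"
      using \<psi>_range \<open>1/4 < r\<close> by auto
    have T: "cutoff_pairing \<Phi> g \<psi> p p' = \<Phi> p - r * \<psi> r * (g q \<bullet> p)"
      using 2 by (simp add: cutoff_pairing_polar)
    show ?thesis
    proof (cases "g q \<bullet> p \<le> 0")
      case True
      then have "r * \<psi> r * (g q \<bullet> p) \<le> 0"
        using \<psi>r \<open>1/4 < r\<close> by (simp add: mult_nonneg_nonpos)
      then show ?thesis
        using T far by (simp add: c_def)
    next
      case False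
      then have "r * \<psi> r * (g q \<bullet> p) \<le> r * (g q \<bullet> p)"
        using \<psi>r \<open>1/4 < r\<close> by (simp add: mult_left_le)
      moreover have "c * (norm (p - p'))\<^sup>2 \<le> \<Phi> p - r * (g q \<bullet> p)"
        unfolding c_def \<open>p' = r *\<^sub>R q\<close> using 2 by (intro polar_lower[OF p \<open>norm q = 1\<close>]) auto
      ultimately show ?thesis
        using T by (simp add: c_def)
    qed
  qed
qed

lemma polar_upper:
  assumes p: "norm p = 1" and q: "norm q = 1" and r: "0 \<le> r" "r \<le> 1"
  shows "\<Phi> p - r * (g q \<bullet> p) \<le> 2 * K * (norm (p - r *\<^sub>R q))\<^sup>2 + (2 * K + B) * (1 - r)"
proof -
  have "\<Phi> p - r * (g q \<bullet> p) = (\<Phi> p - g q \<bullet> p) + (1 - r) * (g q \<bullet> p)"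
    by (simp add: algebra_simps)
  also have "\<dots> \<le> K * (norm (p - q))\<^sup>2 + (1 - r) * B"
    using gap_upper[OF p q] g_bound[OF p q] r by (intro add_mono mult_left_mono) auto
  also have "\<dots> \<le> K * (2 * (norm (p - r *\<^sub>R q))\<^sup>2 + 2 * (1 - r)) + (1 - r) * B"
    using norm_diff_shrink_unit(2)[OF q, of r p] r constants_nonneg
    by (intro add_mono mult_left_mono) auto
  also have "\<dots> = 2 * K * (norm (p - r *\<^sub>R q))\<^sup>2 + (2 * K + B) * (1 - r)"
    by (simp add: algebra_simps)
  finally show ?thesis .
qed

lemma cutoff_pairing_upper:
  assumes p: "norm p = 1" and p': "norm p' \<le> 1"
  shows "cutoff_pairing \<Phi> g \<psi> p p' \<le> 2 * (m' + B + K) * ((norm (p - p'))\<^sup>2 + (1 - norm p'))"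
proof -
  define C where "C = 2 * (m' + B + K)"
  have "0 \<le> C"
    using constants_nonneg by (simp add: C_def)
  have short: "m' + B \<le> C * ((norm (p - p'))\<^sup>2 + (1 - norm p'))" if "norm p' < 1/2"
  proof -
    have "m' + B \<le> C * (1/2)"
      using constants_nonneg by (simp add: C_def)
    also have "\<dots> \<le> C * ((norm (p - p'))\<^sup>2 + (1 - norm p'))"
      using \<open>0 \<le> C\<close> that zero_le_power2[of "norm (p - p')"] by (intro mult_left_mono) linarith+
    finally show ?thesis .
  qed
  from p' show ?thesis
  proof (cases rule: polar_cases)
    case 1
    then show ?thesis
      using short \<Phi>_bounds[OF p] constants_nonneg by (simp add: cutoff_pairing_def C_def)
  next
    case (2 q r)
    have r: "norm p' = r"
      using 2 by simp
    have \<psi>r: "0 \<le> \<psi> r" "\<psi> r \<le> 1"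
      using \<psi>_range \<open>1/4 < r\<close> by auto
    have T: "cutoff_pairing \<Phi> g \<psi> p p' = \<Phi> p - r * \<psi> r * (g q \<bullet> p)"
      using 2 by (simp add: cutoff_pairing_polar)
    show ?thesis
    proof (cases "r < 1/2")
      case True
      have "\<bar>r * \<psi> r * (g q \<bullet> p)\<bar> \<le> 1 * 1 * B"
        unfolding abs_mult using \<psi>r 2 g_bound[OF p \<open>norm q = 1\<close>] by (intro mult_mono) auto
      then have "- (r * \<psi> r * (g q \<bullet> p)) \<le> B"
        by (simp add: abs_le_iff)
      moreover have "m' + B \<le> C * ((norm (p - p'))\<^sup>2 + (1 - norm p'))"
        using short r True by simp
      ultimately show ?thesis
        using T \<Phi>_bounds[OF p] by (simp add: C_def)
    next
      case False
      then have "cutoff_pairing \<Phi> g \<psi> p p' \<le> 2 * K * (norm (p - p'))\<^sup>2 + (2 * K + B) * (1 - r)"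
        using T \<psi>_one polar_upper[OF p \<open>norm q = 1\<close>] 2 by simp
      also have "\<dots> \<le> C * (norm (p - p'))\<^sup>2 + C * (1 - r)"
        using constants_nonneg \<open>r \<le> 1\<close> by (intro add_mono mult_right_mono) (auto simp: C_def)
      finally show ?thesis
        using r by (simp add: C_def distrib_left)
    qed
  qed
qed

end

locale two_homogeneous =
  fixes f :: "'a::euclidean_space \<Rightarrow> real"
  assumes deriv: "\<And>p. (f has_derivative (\<lambda>h. grad f p \<bullet> h)) (at p)"
    and homogeneous: "\<And>p t. 0 < t \<Longrightarrow> f (t *\<^sub>R p) = t\<^sup>2 * f p"
begin

lemma euler_identity: "grad f q \<bullet> q = 2 * f q"
proof -
  have "((\<lambda>t. f (0 + t *\<^sub>R q)) has_real_derivative grad f (0 + 1 *\<^sub>R q) \<bullet> q) (at 1)"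
    by (intro has_real_derivative_along_line deriv)
  moreover have "((\<lambda>t. f (0 + t *\<^sub>R q)) has_real_derivative 2 * f q) (at 1)"
  proof (rule has_field_derivative_transform_within_open[where S = "{0<..}"])
    show "((\<lambda>t. t\<^sup>2 * f q) has_real_derivative 2 * f q) (at 1)"
      by (auto intro!: derivative_eq_intros)
  qed (auto simp: homogeneous)
  ultimately show ?thesis
    by (simp add: DERIV_unique)
qed

lemma grad_scaleR:
  assumes "0 < t"
  shows "grad f (t *\<^sub>R q) = t *\<^sub>R grad f q"
proof -
  have "((\<lambda>v. t *\<^sub>R v) has_derivative (\<lambda>h. t *\<^sub>R h)) (at q)"
    by (auto intro!: derivative_eq_intros)
  from has_derivative_compose[OF this deriv]
  have "((\<lambda>v. f (t *\<^sub>R v)) has_derivative (\<lambda>h. (t *\<^sub>R grad f (t *\<^sub>R q)) \<bullet> h)) (at q)"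
    by simp
  moreover have "(\<lambda>v. f (t *\<^sub>R v)) = (\<lambda>v. t\<^sup>2 * f v)"
    using homogeneous assms by auto
  moreover have "((\<lambda>v. t\<^sup>2 * f v) has_derivative (\<lambda>h. (t\<^sup>2 *\<^sub>R grad f q) \<bullet> h)) (at q)"
    using has_derivative_mult_right[OF deriv, of "t\<^sup>2" q] by simp
  ultimately have "t *\<^sub>R grad f (t *\<^sub>R q) = t *\<^sub>R (t *\<^sub>R grad f q)"
    using has_derivative_unique vector_eq_rdot by (metis power2_eq_square scaleR_scaleR)
  with assms show ?thesis
    by (metis less_irrefl scaleR_cancel_left)
qed

lemma grad_sqrt_scaleR:
  assumes "0 < t" and "0 < f q"
  shows "grad (\<lambda>v. sqrt (f v)) (t *\<^sub>R q) = grad (\<lambda>v. sqrt (f v)) q"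
proof -
  have "0 < f (t *\<^sub>R q)" and "sqrt (f (t *\<^sub>R q)) = t * sqrt (f q)"
    using assms by (simp_all add: homogeneous real_sqrt_mult)
  with assms show ?thesis
    by (simp add: grad_sqrt[OF deriv] grad_scaleR)
qed

end

locale anisotropy = two_homogeneous f for f :: "'a::euclidean_space \<Rightarrow> real" +
  fixes A0 A1 a1 C0 :: real
  assumes A0_pos: "0 < A0"
    and quadratic_bounds: "\<And>p. A0 * (norm p)\<^sup>2 \<le> f p \<and> f p \<le> A1 * (norm p)\<^sup>2"
    and grad_bound: "\<And>p. norm (grad f p) \<le> a1 * norm p"
    and strongly_monotone: "\<And>p q. C0 * (norm (p - q))\<^sup>2 \<le> (grad f p - grad f q) \<bullet> (p - q)"
    and C0_pos: "0 < C0"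
begin

lemma positive:
  assumes "p \<noteq> 0"
  shows "0 < f p"
proof -
  have "0 < A0 * (norm p)\<^sup>2"
    using A0_pos assms by simp
  then show ?thesis
    using quadratic_bounds[of p] by linarith
qed

lemma sqrt_bounds_unit:
  assumes "norm p = 1"
  shows "sqrt A0 \<le> sqrt (f p)" and "sqrt (f p) \<le> sqrt A1"
  using quadratic_bounds[of p] assms by simp_all

lemma grad_sqrt_unit:
  assumes "norm q = 1"
  shows "grad (\<lambda>v. sqrt (f v)) q = (1 / (2 * sqrt (f q))) *\<^sub>R grad f q"
  using assms by (intro grad_sqrt deriv positive) auto

lemma grad_sqrt_inner_bound:
  assumes "norm p = 1" and "norm q = 1"
  shows "\<bar>grad (\<lambda>v. sqrt (f v)) q \<bullet> p\<bar> \<le> a1 / (2 * sqrt A0)"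
proof -
  have "\<bar>grad f q \<bullet> p\<bar> \<le> a1"
    using Cauchy_Schwarz_ineq2[of "grad f q" p] grad_bound[of q] assms by simp
  moreover have "0 < sqrt A0" "sqrt A0 \<le> sqrt (f q)"
    using A0_pos sqrt_bounds_unit[OF assms(2)] by simp_all
  ultimately show ?thesis
    using assms by (simp add: grad_sqrt_unit abs_div frac_le)
qed

text \<open>Rescale q to the point of its ray on the level set of f through p; there the Bregman
  divergence of f at p is the gap of the gauge sqrt f, up to the factor 2 sqrt (f p).\<close>
lemma sqrt_gap_lower:
  assumes p: "norm p = 1" and q: "norm q = 1"
  shows "C0 / (16 * sqrt A1) * (norm (p - q))\<^sup>2 \<le> sqrt (f p) - grad (\<lambda>v. sqrt (f v)) q \<bullet> p"
proof -
  define G where "G = grad (\<lambda>v. sqrt (f v)) q \<bullet> p"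
  have fp: "0 < f p" and fq: "0 < f q"
    using p q by (auto intro: positive)
  define t where "t = sqrt (f p) / sqrt (f q)"
  have t: "0 < t"
    using fp fq by (simp add: t_def)
  have level: "f (t *\<^sub>R q) = f p"
    using homogeneous[OF t, of q] fp fq by (simp add: t_def power_divide)
  have "grad f (t *\<^sub>R q) \<bullet> p = 2 * sqrt (f p) * G"
    using grad_scaleR[OF t, of q] fq by (simp add: G_def grad_sqrt_unit[OF q] t_def)
  moreover have "grad f (t *\<^sub>R q) \<bullet> (t *\<^sub>R q) = 2 * f p"
    using euler_identity[of "t *\<^sub>R q"] level by simp
  moreover have "C0 / 2 * (norm (p - t *\<^sub>R q))\<^sup>2 \<le> bregman f p (t *\<^sub>R q)"
    by (rule bregman_lower_bound[OF deriv strongly_monotone])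
  ultimately have "C0 / 2 * (norm (p - t *\<^sub>R q))\<^sup>2 \<le> 2 * f p - 2 * sqrt (f p) * G"
    using level by (simp add: bregman_def inner_diff_right algebra_simps)
  moreover have "2 * f p - 2 * sqrt (f p) * G = 2 * sqrt (f p) * (sqrt (f p) - G)"
    using fp by (simp add: right_diff_distrib)
  moreover have "C0 / 2 * ((norm (p - q))\<^sup>2 / 4) \<le> C0 / 2 * (norm (p - t *\<^sub>R q))\<^sup>2"
    using norm_diff_ray_unit_ge[OF p q] t C0_pos by simp
  ultimately have gap: "C0 / 8 * (norm (p - q))\<^sup>2 \<le> 2 * sqrt (f p) * (sqrt (f p) - G)"
    by simp
  have "C0 / (16 * sqrt A1) * (norm (p - q))\<^sup>2 \<le> C0 / (16 * sqrt (f p)) * (norm (p - q))\<^sup>2"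
    using C0_pos fp sqrt_bounds_unit(2)[OF p] by (intro mult_right_mono divide_left_mono) auto
  also have "\<dots> \<le> sqrt (f p) - G"
    using gap fp by (simp add: field_simps)
  finally show ?thesis
    unfolding G_def .
qed

lemma A0_le_A1: "A0 \<le> A1"
proof -
  obtain b :: 'a where "b \<in> Basis"
    using nonempty_Basis by blast
  then show ?thesis
    using quadratic_bounds[of b] by simp
qed

lemma a1_nonneg: "0 \<le> a1"
proof -
  obtain b :: 'a where "b \<in> Basis"
    using nonempty_Basis by blast
  then have "norm (grad f b) \<le> a1"
    using grad_bound[of b] by simp
  then show ?thesis
    using norm_ge_zero order_trans by blast
qed

lemma sqrt_gap_le_bregman:
  assumes p: "norm p = 1" and q: "norm q = 1"
  shows "sqrt (f p) - grad (\<lambda>v. sqrt (f v)) q \<bullet> p \<le> bregman f p q / (2 * sqrt (f q))"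
proof -
  have fp: "0 < f p" and fq: "0 < f q"
    using p q by (auto intro: positive)
  have "2 * sqrt (f p) * sqrt (f q) \<le> f p + f q"
    using zero_le_power2[of "sqrt (f p) - sqrt (f q)"] fp fq
    by (simp add: power2_diff algebra_simps)
  then have "sqrt (f p) \<le> (f p + f q) / (2 * sqrt (f q))"
    using fq by (simp add: field_simps)
  also have "f p + f q = bregman f p q + grad f q \<bullet> p"
    using euler_identity[of q] by (simp add: bregman_def inner_diff_right)
  finally show ?thesis
    using fq by (simp add: grad_sqrt_unit[OF q] add_divide_distrib)
qed

lemma sqrt_gap_upper:
  assumes "0 \<le> M"
    and bregman_bound: "\<And>p q. norm p = 1 \<Longrightarrow> norm q = 1 \<Longrightarrow> norm (p - q) \<le> 1 \<Longrightarrow>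
      bregman f p q \<le> M * (norm (p - q))\<^sup>2"
    and p: "norm p = 1" and q: "norm q = 1"
  shows "sqrt (f p) - grad (\<lambda>v. sqrt (f v)) q \<bullet> p
    \<le> (M / (2 * sqrt A0) + sqrt A1 + a1 / (2 * sqrt A0)) * (norm (p - q))\<^sup>2"
proof (cases "norm (p - q) \<le> 1")
  case True
  have "0 < sqrt A0" and "sqrt A0 \<le> sqrt (f q)"
    using A0_pos sqrt_bounds_unit(1)[OF q] by simp_all
  then have "bregman f p q / (2 * sqrt (f q)) \<le> M * (norm (p - q))\<^sup>2 / (2 * sqrt (f q))"
    using bregman_bound[OF p q True] by (intro divide_right_mono) auto
  also have "\<dots> \<le> M * (norm (p - q))\<^sup>2 / (2 * sqrt A0)"
    using \<open>0 \<le> M\<close> \<open>0 < sqrt A0\<close> \<open>sqrt A0 \<le> sqrt (f q)\<close> by (intro divide_left_mono) auto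
  finally have "bregman f p q / (2 * sqrt (f q)) \<le> M / (2 * sqrt A0) * (norm (p - q))\<^sup>2"
    by simp
  moreover have "0 \<le> (sqrt A1 + a1 / (2 * sqrt A0)) * (norm (p - q))\<^sup>2"
    using a1_nonneg A0_pos A0_le_A1 by simp
  ultimately show ?thesis
    using sqrt_gap_le_bregman[OF p q] by (simp add: distrib_right)
next
  case False
  then have "1 \<le> (norm (p - q))\<^sup>2"
    by (simp add: one_le_power)
  have "sqrt (f p) - grad (\<lambda>v. sqrt (f v)) q \<bullet> p \<le> sqrt A1 + a1 / (2 * sqrt A0)"
    using sqrt_bounds_unit(2)[OF p] grad_sqrt_inner_bound[OF p q] by linarith
  also have "\<dots> \<le> M / (2 * sqrt A0) + sqrt A1 + a1 / (2 * sqrt A0)"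
    using \<open>0 \<le> M\<close> A0_pos by simp
  also have "\<dots> \<le> (M / (2 * sqrt A0) + sqrt A1 + a1 / (2 * sqrt A0)) * (norm (p - q))\<^sup>2"
    using mult_left_mono[OF \<open>1 \<le> (norm (p - q))\<^sup>2\<close>] \<open>0 \<le> M\<close> a1_nonneg A0_pos A0_le_A1
    by simp
  finally show ?thesis .
qed

lemma sphere_gap_sqrt:
  assumes "0 \<le> M"
    and bregman_bound: "\<And>p q. norm p = 1 \<Longrightarrow> norm q = 1 \<Longrightarrow> norm (p - q) \<le> 1 \<Longrightarrow>
      bregman f p q \<le> M * (norm (p - q))\<^sup>2"
    and \<psi>_range: "\<And>t. 1/4 \<le> t \<Longrightarrow> 0 \<le> \<psi> t \<and> \<psi> t \<le> 1"
    and \<psi>_one: "\<And>t. 1/2 \<le> t \<Longrightarrow> \<psi> t = 1"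
  shows "sphere_gap (\<lambda>v. sqrt (f v)) (grad (\<lambda>v. sqrt (f v))) \<psi> (sqrt A0) (sqrt A1)
    (a1 / (2 * sqrt A0)) (C0 / (16 * sqrt A1)) (M / (2 * sqrt A0) + sqrt A1 + a1 / (2 * sqrt A0))"
proof
  show "0 < sqrt A0" "0 < C0 / (16 * sqrt A1)"
    using A0_pos A0_le_A1 C0_pos by simp_all
  show "grad (\<lambda>v. sqrt (f v)) (t *\<^sub>R q) = grad (\<lambda>v. sqrt (f v)) q" if "norm q = 1" "0 < t" for q t
    using that by (intro grad_sqrt_scaleR positive) auto
  show "sqrt A0 \<le> sqrt (f p) \<and> sqrt (f p) \<le> sqrt A1" if "norm p = 1" for p
    using sqrt_bounds_unit[OF that] by simp
  show "\<bar>grad (\<lambda>v. sqrt (f v)) q \<bullet> p\<bar> \<le> a1 / (2 * sqrt A0)" if "norm p = 1" "norm q = 1" for p q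
    using grad_sqrt_inner_bound[OF that] .
  show "C0 / (16 * sqrt A1) * (norm (p - q))\<^sup>2 \<le> sqrt (f p) - grad (\<lambda>v. sqrt (f v)) q \<bullet> p"
    if "norm p = 1" "norm q = 1" for p q
    using sqrt_gap_lower[OF that] .
  show "sqrt (f p) - grad (\<lambda>v. sqrt (f v)) q \<bullet> p
      \<le> (M / (2 * sqrt A0) + sqrt A1 + a1 / (2 * sqrt A0)) * (norm (p - q))\<^sup>2"
    if "norm p = 1" "norm q = 1" for p q
    using sqrt_gap_upper[OF \<open>0 \<le> M\<close> bregman_bound that] .
qed (use \<psi>_range \<psi>_one in auto)

end

lemma smooth_nonneg_mono_on:
  assumes "smooth_nonneg f D" and "\<forall>t\<ge>0. 0 \<le> D 1 t"
  shows "mono_on {0<..} f"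
proof (rule mono_onI)
  fix u v :: real
  assume "u \<in> {0<..}" "u \<le> v"
  then show "f u \<le> f v"
  proof (intro DERIV_nonneg_imp_nondecreasing[OF \<open>u \<le> v\<close>] exI conjI)
    fix y assume "u \<le> y" "y \<le> v"
    with \<open>u \<in> {0<..}\<close> have "0 < y"
      by simp
    then have "at y within {0..} = at y"
      by (intro at_within_interior) simp
    with assms \<open>0 < y\<close> show "(f has_real_derivative D 1 y) (at y)" and "0 \<le> D 1 y"
      unfolding smooth_nonneg_def by (metis One_nat_def less_imp_le)+
  qed
qed

lemma cutoff_range:
  assumes "\<exists>D. smooth_nonneg \<psi> D \<and> (\<forall>t\<ge>0. 0 \<le> D 1 t)"
    and "\<psi> (1/4) = 0" and "\<And>t. 1/2 \<le> t \<Longrightarrow> \<psi> t = 1" and "1/4 \<le> t"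
  shows "0 \<le> \<psi> t \<and> \<psi> t \<le> 1"
proof -
  have "mono_on {0<..} \<psi>"
    using assms(1) smooth_nonneg_mono_on by blast
  then have "\<psi> (1/4) \<le> \<psi> t" and "\<psi> (min t (1/2)) \<le> \<psi> (1/2)"
    using assms(4) by (auto intro: mono_onD)
  then show ?thesis
    using assms(2,3) by (cases "t \<le> 1/2") auto
qed

lemma periodic_cube_representative:
  fixes A :: "real^'d \<Rightarrow> 'b \<Rightarrow> 'c"
  assumes periodic: "\<And>x p (k::'d \<Rightarrow> int). A (x + (\<chi> i. of_int (k i))) p = A x p"
  obtains x0 where "x0 \<in> cbox 0 1" and "A x0 = A x"
proof
  define x0 where "x0 = x - (\<chi> i. of_int \<lfloor>x $ i\<rfloor>)"
  show "x0 \<in> cbox 0 1"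
    unfolding x0_def mem_box_cart
    by (auto simp: of_int_floor_le) (smt (verit) real_of_int_floor_add_one_gt)
  show "A x0 = A x"
    using periodic[where x = x0 and k = "\<lambda>i. \<lfloor>x $ i\<rfloor>"] by (auto simp: x0_def fun_eq_iff)
qed

lemma periodic_C2_bregman_bound:
  fixes A :: "real^'d \<Rightarrow> real^'d \<Rightarrow> real"
  assumes periodic: "\<And>x p (k::'d \<Rightarrow> int). A (x + (\<chi> i. of_int (k i))) p = A x p"
    and C2: "C2_on (UNIV \<times> (UNIV - {0})) (\<lambda>z. A (fst z) (snd z))"
  obtains M where "0 \<le> M"
    and "\<And>x p q. norm p = 1 \<Longrightarrow> norm q = 1 \<Longrightarrow> norm (p - q) \<le> 1 \<Longrightarrow>
      bregman (A x) p q \<le> M * (norm (p - q))\<^sup>2"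
proof -
  obtain M where "0 \<le> M" and cube_bound: "\<And>x p q. x \<in> cbox 0 1 \<Longrightarrow> norm p = 1 \<Longrightarrow> norm q = 1 \<Longrightarrow>
      norm (p - q) \<le> 1 \<Longrightarrow> bregman (A x) p q \<le> M * (norm (p - q))\<^sup>2"
    using C2_on_bregman_bound[OF C2 compact_cbox] by auto
  show ?thesis
  proof (rule that[OF \<open>0 \<le> M\<close>])
    fix x p q :: "real^'d"
    assume "norm p = 1" "norm q = 1" "norm (p - q) \<le> 1"
    moreover obtain x0 where "x0 \<in> cbox 0 1" and "A x0 = A x"
      by (rule periodic_cube_representative[OF periodic])
    ultimately show "bregman (A x) p q \<le> M * (norm (p - q))\<^sup>2"
      using cube_bound by metis
  qed
qed

theorem mainTheorem14:
  fixes A :: "real^'d \<Rightarrow> real^'d \<Rightarrow> real"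
    and \<psi> :: "real \<Rightarrow> real"
    and A0 A1 a1 C0 :: real
  assumes periodic: "\<And>x p (k::'d \<Rightarrow> int). A (x + (\<chi> i. of_int (k i))) p = A x p"
    and C1: "C1_on UNIV (\<lambda>z::(real^'d) \<times> (real^'d). A (fst z) (snd z))"
    and C2: "C2_on (UNIV \<times> (UNIV - {0})) (\<lambda>z::(real^'d) \<times> (real^'d). A (fst z) (snd z))"
    and pos: "\<And>x p. p \<noteq> 0 \<Longrightarrow> A x p > 0"
    and hom: "\<And>x p (t::real). t > 0 \<Longrightarrow> A x (t *\<^sub>R p) = t\<^sup>2 * A x p"
    and A0pos: "0 < A0" and A01: "A0 \<le> A1"
    and bounds: "\<And>x p. A0 * (norm p)\<^sup>2 \<le> A x p \<and> A x p \<le> A1 * (norm p)\<^sup>2"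
    and grad_bd: "\<And>x p. norm (grad (A x) p) \<le> a1 * norm p"
    and convex: "\<And>x p q. (grad (A x) p - grad (A x) q) \<bullet> (p - q) \<ge> C0 * (norm (p - q))\<^sup>2"
    and C0pos: "C0 > 0"
    and psi_smooth: "\<exists>D. smooth_nonneg \<psi> D \<and> (\<forall>t\<ge>0. D 1 t \<ge> 0)"
    and psi0: "\<And>t. 0 \<le> t \<Longrightarrow> t \<le> 1/4 \<Longrightarrow> \<psi> t = 0"
    and psi1: "\<And>t. 1/2 \<le> t \<Longrightarrow> \<psi> t = 1"
  shows "\<exists>c C. c > 0 \<and> C > 0 \<and>
    (\<forall>x p p'. norm p = 1 \<longrightarrow> norm p' \<le> 1 \<longrightarrow>
      (let T = sqrt (A x p) -
              (if norm p' \<le> 1/4 then 0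
               else norm p' * \<psi> (norm p') * (grad (\<lambda>q. sqrt (A x q)) p' \<bullet> p))
       in c * (norm (p - p'))\<^sup>2 \<le> T \<and> T \<le> C * ((norm (p - p'))\<^sup>2 + (1 - norm p'))))"
proof -
  obtain M where "0 \<le> M" and bregman_bound: "\<And>x p q. norm p = 1 \<Longrightarrow> norm q = 1 \<Longrightarrow>
      norm (p - q) \<le> 1 \<Longrightarrow> bregman (A x) p q \<le> M * (norm (p - q))\<^sup>2"
    using periodic_C2_bregman_bound[OF periodic C2] by metis
  have psi_range: "0 \<le> \<psi> t \<and> \<psi> t \<le> 1" if "1/4 \<le> t" for t
    using cutoff_range[OF psi_smooth _ psi1 that] psi0[of "1/4"] by simp
  have deriv: "(A x has_derivative (\<lambda>h. grad (A x) p \<bullet> h)) (at p)" for x p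
    using C1 has_derivative_partial_grad(1)[of "\<lambda>z. A (fst z) (snd z)"] unfolding C1_on_def by fastforce
  define B L K where "B = a1 / (2 * sqrt A0)" and "L = C0 / (16 * sqrt A1)"
    and "K = M / (2 * sqrt A0) + sqrt A1 + a1 / (2 * sqrt A0)"
  have gap: "sphere_gap (\<lambda>q. sqrt (A x q)) (grad (\<lambda>q. sqrt (A x q))) \<psi> (sqrt A0) (sqrt A1) B L K" for x
    unfolding B_def L_def K_def
    by (intro anisotropy.sphere_gap_sqrt[OF _ \<open>0 \<le> M\<close> bregman_bound psi_range psi1]
        anisotropy.intro two_homogeneous.intro anisotropy_axioms.intro)
      (use deriv hom A0pos bounds grad_bd convex C0pos in auto)
  have "0 < sqrt A1"
    using A0pos A01 by simp
  show ?thesis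
  proof (rule exI[of _ "min (sqrt A0 / 4) (L / 8)"], rule exI[of _ "2 * (sqrt A1 + B + K)"],
      intro conjI allI impI)
    show "0 < min (sqrt A0 / 4) (L / 8)"
      using \<open>0 < sqrt A1\<close> A0pos C0pos by (simp add: L_def)
    show "0 < 2 * (sqrt A1 + B + K)"
      using \<open>0 < sqrt A1\<close> sphere_gap.constants_nonneg[OF gap] by (intro mult_pos_pos add_pos_nonneg) auto
  qed (use sphere_gap.cutoff_pairing_lower[OF gap, unfolded cutoff_pairing_def]
         sphere_gap.cutoff_pairing_upper[OF gap, unfolded cutoff_pairing_def] in \<open>unfold Let_def, blast\<close>)
qed

end
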